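(* Let $\sigma\in C^1([0,\infty))$ be a nonnegative function and $u_*\in(0,\infty]$ such that $\sigma(s)=0$ for $s\ge u_*$, $\sigma(s)>0$ for $0\le s<u_*$, $\sigma$ is monotone decreasing on $[0,u_* )$, $\|\sigma\|_{C^1([0,u_*])}\le\mu<\infty$, and $\int_0^{u_*}\frac{ds}{\sigma(s)}=\infty$. Let $F(u):=\int_0^u\frac{ds}{\sigma(s)}$ for $u\in[0,u_* )$ (so $F$ maps $[0,u_* )$ onto $[0,\infty)$) and define $a(v):=\sigma(F^{-1}(v))$ for $v\in[0,\infty)$. Then $a$ is strictly positive and monotone decreasing, and for all $v\ge0$ and $y$ with $v+y\ge 0$, $$e^{-\mu|y|}\le\frac{a(v+y)}{a(v)}\le e^{\mu|y|}.$$ Moreover, for any $p\ge 2$, $$\frac{a(v)}{v^p}\int_0^v\frac{s^{p-2}}{a(s)}\,ds\longrightarrow 0\quad\text{as } v\to\infty.$$ *)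

theory Defs
  imports "HOL-Analysis.Analysis"
begin

definition below :: "ereal \<Rightarrow> real set" where
  "below ustar = {s. 0 \<le> s \<and> ereal s < ustar}"

definition below_cl :: "ereal \<Rightarrow> real set" where
  "below_cl ustar = {s. 0 \<le> s \<and> ereal s \<le> ustar}"

definition C1_norm_le :: "(real \<Rightarrow> real) \<Rightarrow> (real \<Rightarrow> real) \<Rightarrow> real set \<Rightarrow> real \<Rightarrow> bool" where
  "C1_norm_le f f' D mu \<longleftrightarrow>
     bdd_above ((\<lambda>s. \<bar>f s\<bar>) ` D) \<and> bdd_above ((\<lambda>s. \<bar>f' s\<bar>) ` D) \<and>
     (SUP s\<in>D. \<bar>f s\<bar>) + (SUP s\<in>D. \<bar>f' s\<bar>) \<le> mu"

definition Fsig :: "(real \<Rightarrow> real) \<Rightarrow> real \<Rightarrow> real" where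
  "Fsig \<sigma> u = integral {0..u} (\<lambda>s. 1 / \<sigma> s)"

definition asig :: "(real \<Rightarrow> real) \<Rightarrow> ereal \<Rightarrow> real \<Rightarrow> real" where
  "asig \<sigma> ustar v = \<sigma> (THE u. u \<in> below ustar \<and> Fsig \<sigma> u = v)"

end

theory Submission
  imports Defs
begin

text \<open>
  Since \<open>1/\<sigma>\<close> is positive and its integral over \<open>[0,u\<^sub>*)\<close> diverges, \<open>F\<close> is an increasing
  bijection of \<open>[0,u\<^sub>*)\<close> onto \<open>[0,\<infinity>)\<close>, so \<open>a = \<sigma> \<circ> F\<^sup>-\<^sup>1\<close> is positive and decreasing. From
  \<open>\<sigma>' \<ge> -\<mu>\<close> the function \<open>ln \<sigma> + \<mu> F\<close> is nondecreasing, i.e. \<open>ln a(v) + \<mu> v\<close> is nondecreasing;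
  together with the monotonicity of \<open>a\<close> this gives the two-sided exponential bound. Finally,
  monotonicity of \<open>a\<close> bounds \<open>\<integral>\<^sub>0\<^sup>v s\<^sup>p\<^sup>-\<^sup>2/a(s) ds\<close> by \<open>v\<^sup>p\<^sup>-\<^sup>1/a(v)\<close>, so the quotient in the
  last claim is at most \<open>1/v\<close>.
\<close>

lemma C1_norm_le_bound:
  assumes "C1_norm_le f f' D \<mu>" and "x \<in> D"
  shows "\<bar>f x\<bar> + \<bar>f' x\<bar> \<le> \<mu>"
proof -
  have "\<bar>f x\<bar> \<le> (SUP s\<in>D. \<bar>f s\<bar>)" and "\<bar>f' x\<bar> \<le> (SUP s\<in>D. \<bar>f' s\<bar>)"
    using assms unfolding C1_norm_le_def by (auto intro: cSUP_upper)
  then show ?thesis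
    using assms(1) unfolding C1_norm_le_def by linarith
qed

lemma zero_in_below: "ustar > 0 \<Longrightarrow> 0 \<in> below ustar"
  by (simp add: below_def zero_ereal_def)

lemma atLeastAtMost_subset_below: "u \<in> below ustar \<Longrightarrow> {0..u} \<subseteq> below ustar"
  unfolding below_def by (auto intro: le_less_trans[OF ereal_less_eq(3)[THEN iffD2]])

lemma interval_subset_below:
  assumes "l \<in> below ustar" and "u \<in> below ustar"
  shows "{l..u} \<subseteq> below ustar"
proof -
  have "{l..u} \<subseteq> {0..u}"
    using assms(1) by (auto simp: below_def)
  with atLeastAtMost_subset_below[OF assms(2)] show ?thesis
    by blast
qed

lemma below_subset_below_cl: "below ustar \<subseteq> below_cl ustar"
  unfolding below_def below_cl_def by auto

lemma nn_integral_interval_eq_integral: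
  fixes g :: "real \<Rightarrow> real"
  assumes "continuous_on {a..b} g" and "\<And>x. x \<in> {a..b} \<Longrightarrow> 0 \<le> g x"
  shows "(\<integral>\<^sup>+ s. ennreal (g s) * indicator {a..b} s \<partial>lborel) = ennreal (integral {a..b} g)"
  using assms integrable_continuous_real integrable_integral
  by (intro nn_integral_has_integral_lebesgue') blast+

lemma below_exhausting_seq:
  assumes "ustar > 0"
  obtains X :: "nat \<Rightarrow> real"
  where "incseq X" and "\<And>n. X n \<in> below ustar" and "\<And>s. s \<in> below ustar \<Longrightarrow> \<exists>n. s \<le> X n"
proof -
  obtain X :: "nat \<Rightarrow> real" where "incseq X" and "\<And>n. 0 < X n"
    and "\<And>n. X n < ustar" and X_lim: "X \<longlonglongrightarrow> ustar"
    using ereal_incseq_approx[OF assms] by (metis zero_ereal_def ereal_less(2))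
  moreover have "\<exists>n. s \<le> X n" if "s \<in> below ustar" for s
  proof -
    have "eventually (\<lambda>n. s < X n) sequentially"
      using X_lim that unfolding below_def by (auto simp: order_tendsto_iff)
    then show ?thesis
      using eventually_sequentially less_imp_le by (metis order.refl)
  qed
  ultimately show ?thesis
    using that unfolding below_def by (simp add: less_imp_le)
qed

lemma indicator_below_eq_SUP:
  assumes "\<And>n. X n \<in> below ustar" and "\<And>s. s \<in> below ustar \<Longrightarrow> \<exists>n. s \<le> X n"
  shows "indicator (below ustar) s = (SUP n. indicator {0..X n} s :: ennreal)"
proof (cases "s \<in> below ustar")
  case True
  then obtain n where "s \<in> {0..X n}"
    using assms(2) by (auto simp: below_def)
  with True show ?thesis
    by (auto intro!: antisym SUP_upper2[of n] SUP_least split: split_indicator)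
next
  case False
  then have "s \<notin> {0..X n}" for n
    using atLeastAtMost_subset_below[OF assms(1)] by blast
  with False show ?thesis
    by simp
qed

lemma nn_integral_below_eq_SUP_integral:
  assumes "ustar > 0" and cont: "continuous_on (below ustar) g"
    and nonneg: "\<And>x. x \<in> below ustar \<Longrightarrow> 0 \<le> g x"
  shows "(\<integral>\<^sup>+ s\<in>below ustar. ennreal (g s) \<partial>lborel) = (SUP u\<in>below ustar. ennreal (integral {0..u} g))"
proof -
  have interval_integral:
    "(\<integral>\<^sup>+ s. ennreal (g s) * indicator {0..u} s \<partial>lborel) = ennreal (integral {0..u} g)"
    if "u \<in> below ustar" for u
    using atLeastAtMost_subset_below[OF that] cont nonneg
    by (intro nn_integral_interval_eq_integral) (auto intro: continuous_on_subset)
  obtain X where "incseq X" and X_below: "\<And>n. X n \<in> below ustar"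
    and X_cover: "\<And>s. s \<in> below ustar \<Longrightarrow> \<exists>n. s \<le> X n"
    using below_exhausting_seq[OF \<open>ustar > 0\<close>] by blast
  define f where "f n s = ennreal (g s) * indicator {0..X n} s" for n s
  have f_inc: "incseq f"
    using \<open>incseq X\<close> by (auto simp: incseq_def le_fun_def f_def split: split_indicator intro: order_trans)
  have f_meas: "f n \<in> borel_measurable lborel" for n
  proof -
    have "(\<lambda>s. indicator {0..X n} s *\<^sub>R g s) \<in> borel_measurable borel"
      using cont atLeastAtMost_subset_below[OF X_below]
      by (intro borel_measurable_continuous_on_indicator) (auto intro: continuous_on_subset)
    moreover have "f n = (\<lambda>s. ennreal (indicator {0..X n} s *\<^sub>R g s))"
      by (auto simp: f_def fun_eq_iff split: split_indicator)
    ultimately show ?thesis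
      by (simp add: measurable_compose[OF _ measurable_ennreal])
  qed
  have f_SUP: "(\<lambda>s. ennreal (g s) * indicator (below ustar) s) = (\<lambda>s. SUP n. f n s)"
    by (simp add: fun_eq_iff f_def indicator_below_eq_SUP[OF X_below X_cover] SUP_mult_left_ennreal)
  have monotone_convergence:
    "(\<integral>\<^sup>+ s\<in>below ustar. ennreal (g s) \<partial>lborel) = (SUP n. ennreal (integral {0..X n} g))"
    unfolding f_SUP nn_integral_monotone_convergence_SUP[OF f_inc f_meas]
    unfolding f_def interval_integral[OF X_below] ..
  show ?thesis
  proof (rule antisym)
    show "(\<integral>\<^sup>+ s\<in>below ustar. ennreal (g s) \<partial>lborel) \<le> (SUP u\<in>below ustar. ennreal (integral {0..u} g))"
      unfolding monotone_convergence using X_below by (auto intro!: SUP_mono)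
    show "(SUP u\<in>below ustar. ennreal (integral {0..u} g)) \<le> (\<integral>\<^sup>+ s\<in>below ustar. ennreal (g s) \<partial>lborel)"
    proof (rule SUP_least)
      fix u assume "u \<in> below ustar"
      then have "ennreal (integral {0..u} g) = (\<integral>\<^sup>+ s. ennreal (g s) * indicator {0..u} s \<partial>lborel)"
        by (simp add: interval_integral)
      also have "\<dots> \<le> (\<integral>\<^sup>+ s\<in>below ustar. ennreal (g s) \<partial>lborel)"
        using atLeastAtMost_subset_below[OF \<open>u \<in> below ustar\<close>]
        by (intro nn_integral_mono) (auto split: split_indicator)
      finally show "ennreal (integral {0..u} g) \<le> (\<integral>\<^sup>+ s\<in>below ustar. ennreal (g s) \<partial>lborel)" .
    qed
  qed
qed

lemma Fsig_has_real_derivative: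
  assumes "continuous_on {0..u} \<sigma>" and "\<And>s. s \<in> {0..u} \<Longrightarrow> \<sigma> s \<noteq> 0" and "x \<in> {0..u}"
  shows "(Fsig \<sigma> has_real_derivative 1 / \<sigma> x) (at x within {0..u})"
  unfolding Fsig_def[abs_def]
  by (intro integral_has_real_derivative continuous_on_divide continuous_on_const) (use assms in auto)

lemma ratio_exp_bounds:
  fixes a :: "real \<Rightarrow> real"
  assumes pos: "\<And>v. 0 \<le> v \<Longrightarrow> 0 < a v"
    and antimono: "\<And>v w. 0 \<le> v \<Longrightarrow> v \<le> w \<Longrightarrow> a w \<le> a v"
    and ln_plus_mono: "\<And>v w. 0 \<le> v \<Longrightarrow> v \<le> w \<Longrightarrow> ln (a v) + \<mu> * v \<le> ln (a w) + \<mu> * w"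
    and "0 \<le> \<mu>" and "0 \<le> v" and "0 \<le> v + y"
  shows "exp (- \<mu> * \<bar>y\<bar>) \<le> a (v + y) / a v \<and> a (v + y) / a v \<le> exp (\<mu> * \<bar>y\<bar>)"
proof -
  have forward: "exp (- \<mu> * (w - v)) \<le> a w / a v \<and> a w / a v \<le> 1"
    if "0 \<le> v" "v \<le> w" for v w
  proof
    have "- \<mu> * (w - v) \<le> ln (a w) - ln (a v)"
      using ln_plus_mono[OF that] by (simp add: algebra_simps)
    then have "exp (- \<mu> * (w - v)) \<le> exp (ln (a w) - ln (a v))"
      by simp
    also have "\<dots> = a w / a v"
      using pos that by (simp add: exp_diff)
    finally show "exp (- \<mu> * (w - v)) \<le> a w / a v" .
    show "a w / a v \<le> 1"
      using pos antimono that by simp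
  qed
  show ?thesis
  proof (cases "0 \<le> y")
    case True
    then have "exp (- \<mu> * \<bar>y\<bar>) \<le> a (v + y) / a v" and "a (v + y) / a v \<le> 1"
      using forward[of v "v + y"] \<open>0 \<le> v\<close> by simp_all
    moreover have "1 \<le> exp (\<mu> * \<bar>y\<bar>)"
      using \<open>0 \<le> \<mu>\<close> by simp
    ultimately show ?thesis
      by linarith
  next
    case False
    then have lower: "exp (- \<mu> * \<bar>y\<bar>) \<le> a v / a (v + y)" and upper: "a v / a (v + y) \<le> 1"
      using forward[of "v + y" v] \<open>0 \<le> v + y\<close> by simp_all
    have ratio_pos: "0 < a v / a (v + y)"
      using pos[OF \<open>0 \<le> v\<close>] pos[OF \<open>0 \<le> v + y\<close>] by simp
    have inverse_ratio: "a (v + y) / a v = inverse (a v / a (v + y))"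
      by simp
    have "a (v + y) / a v \<le> exp (\<mu> * \<bar>y\<bar>)"
      unfolding inverse_ratio using le_imp_inverse_le[OF lower] by (simp add: exp_minus)
    moreover have "1 \<le> a (v + y) / a v"
      unfolding inverse_ratio using ratio_pos upper by (rule one_le_inverse)
    moreover have "exp (- \<mu> * \<bar>y\<bar>) \<le> 1"
      using \<open>0 \<le> \<mu>\<close> by simp
    ultimately show ?thesis
      by linarith
  qed
qed

lemma decreasing_weight_integral_tendsto_zero:
  fixes a :: "real \<Rightarrow> real" and p :: real
  assumes pos: "\<And>v. 0 \<le> v \<Longrightarrow> 0 < a v"
    and antimono: "\<And>v w. 0 \<le> v \<Longrightarrow> v \<le> w \<Longrightarrow> a w \<le> a v"
    and "2 \<le> p"
  shows "((\<lambda>v. a v / v powr p * integral {0..v} (\<lambda>s. s powr (p - 2) / a s)) \<longlongrightarrow> 0) at_top"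
proof (rule tendsto_sandwich[of "\<lambda>_. 0" _ _ inverse])
  define h where "h = (\<lambda>s. s powr (p - 2) / a s)"
  have bounds: "0 \<le> a v / v powr p * integral {0..v} h \<and>
      a v / v powr p * integral {0..v} h \<le> inverse v" if "0 < v" for v
  proof -
    have h_nonneg: "0 \<le> h s" if "s \<in> {0..v}" for s
      using pos that unfolding h_def by (simp add: less_imp_le)
    have h_le: "h s \<le> v powr (p - 2) / a v" if "s \<in> {0..v}" for s
      unfolding h_def using that pos[of v] pos[of s] antimono[of s v] \<open>0 < v\<close> \<open>2 \<le> p\<close>
      by (intro frac_le powr_mono2) auto
    have integral_bounds: "0 \<le> integral {0..v} h \<and> integral {0..v} h \<le> v * (v powr (p - 2) / a v)"
    proof (cases "h integrable_on {0..v}")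
      case True
      have "integral {0..v} h \<le> integral {0..v} (\<lambda>_. v powr (p - 2) / a v)"
        using True h_le by (intro integral_le) auto
      then show ?thesis
        using \<open>0 < v\<close> integral_nonneg[OF True h_nonneg] by simp
    next
      case False
      then show ?thesis
        using \<open>0 < v\<close> pos[of v] by (simp add: not_integrable_integral)
    qed
    have "v powr p = v powr (p - 2) * v powr 2"
      by (simp flip: powr_add)
    also have "\<dots> = v powr (p - 2) * v * v"
      using \<open>0 < v\<close> by (simp add: powr_numeral power2_eq_square)
    finally have v_powr_p: "v powr p = v powr (p - 2) * v * v" .
    have "a v / v powr p * integral {0..v} h \<le> a v / v powr p * (v * (v powr (p - 2) / a v))"
      using integral_bounds pos[of v] \<open>0 < v\<close> by (intro mult_left_mono) auto
    also have "\<dots> = inverse v"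
      unfolding v_powr_p using \<open>0 < v\<close> pos[of v] by (simp add: field_simps)
    finally show ?thesis
      using integral_bounds pos[of v] \<open>0 < v\<close> by simp
  qed
  show "eventually (\<lambda>v. 0 \<le> a v / v powr p * integral {0..v} (\<lambda>s. s powr (p - 2) / a s)) at_top"
    and "eventually (\<lambda>v. a v / v powr p * integral {0..v} (\<lambda>s. s powr (p - 2) / a s) \<le> inverse v) at_top"
    unfolding h_def[symmetric] using bounds by (auto intro: eventually_at_top_linorderI[of 1])
  show "((\<lambda>_. 0) \<longlongrightarrow> (0::real)) at_top"
    by simp
  show "(inverse \<longlongrightarrow> (0::real)) at_top"
    by (rule tendsto_inverse_0_at_top[OF filterlim_ident])
qed

locale osgood_profile =
  fixes \<sigma> \<sigma>' :: "real \<Rightarrow> real" and ustar :: ereal and \<mu> :: real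
  assumes ustar_pos: "ustar > 0"
    and has_derivative: "\<And>x. x \<in> below ustar \<Longrightarrow> (\<sigma> has_real_derivative \<sigma>' x) (at x within {0..})"
    and pos: "\<And>s. s \<in> below ustar \<Longrightarrow> \<sigma> s > 0"
    and antimono: "\<And>s t. s \<in> below ustar \<Longrightarrow> t \<in> below ustar \<Longrightarrow> s \<le> t \<Longrightarrow> \<sigma> t \<le> \<sigma> s"
    and derivative_bound: "\<And>s. s \<in> below ustar \<Longrightarrow> \<bar>\<sigma>' s\<bar> \<le> \<mu>"
    and diverge: "(\<integral>\<^sup>+ s\<in>below ustar. ennreal (1 / \<sigma> s) \<partial>lborel) = \<infinity>"
begin

lemma mu_nonneg: "0 \<le> \<mu>"
  using derivative_bound[OF zero_in_below[OF ustar_pos]] by linarith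

lemma continuous_on_below: "continuous_on (below ustar) \<sigma>"
proof (rule DERIV_continuous_on)
  fix x assume "x \<in> below ustar"
  then show "(\<sigma> has_real_derivative \<sigma>' x) (at x within below ustar)"
    by (rule has_field_derivative_subset[OF has_derivative]) (auto simp: below_def)
qed

lemma Fsig_has_real_derivative_below:
  assumes "u \<in> below ustar" and "x \<in> {0..u}"
  shows "(Fsig \<sigma> has_real_derivative 1 / \<sigma> x) (at x within {0..u})"
proof (rule Fsig_has_real_derivative)
  show "continuous_on {0..u} \<sigma>"
    using continuous_on_below atLeastAtMost_subset_below[OF assms(1)] by (rule continuous_on_subset)
  show "\<sigma> s \<noteq> 0" if "s \<in> {0..u}" for s
    using pos[of s] that atLeastAtMost_subset_below[OF assms(1)] by auto
qed (use assms(2) in simp)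

lemma continuous_on_Fsig: "u \<in> below ustar \<Longrightarrow> continuous_on {0..u} (Fsig \<sigma>)"
  by (rule DERIV_continuous_on) (rule Fsig_has_real_derivative_below)

lemma DERIV_Fsig:
  assumes "u \<in> below ustar" and "0 < x" and "x < u"
  shows "DERIV (Fsig \<sigma>) x :> 1 / \<sigma> x"
  using Fsig_has_real_derivative_below[OF assms(1), of x] assms
  by (simp add: at_within_interior[of x "{0..u}"])

lemma DERIV_sigma: "0 < x \<Longrightarrow> x \<in> below ustar \<Longrightarrow> DERIV \<sigma> x :> \<sigma>' x"
  using has_derivative[of x] by (simp add: at_within_interior[of x "{0..}"])

lemma Fsig_strict_mono:
  assumes "u1 \<in> below ustar" and "u2 \<in> below ustar" and "u1 < u2"
  shows "Fsig \<sigma> u1 < Fsig \<sigma> u2"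
proof (rule DERIV_pos_imp_increasing_open[OF \<open>u1 < u2\<close>])
  fix x assume "u1 < x" "x < u2"
  then have "x \<in> below ustar"
    using interval_subset_below[OF assms(1,2)] by auto
  then have "0 < 1 / \<sigma> x"
    using pos by simp
  moreover have "DERIV (Fsig \<sigma>) x :> 1 / \<sigma> x"
    using \<open>x \<in> below ustar\<close> \<open>u1 < x\<close> \<open>x < u2\<close> assms(1) by (intro DERIV_Fsig[OF assms(2)]) (auto simp: below_def)
  ultimately show "\<exists>y. DERIV (Fsig \<sigma>) x :> y \<and> 0 < y"
    by blast
next
  show "continuous_on {u1..u2} (Fsig \<sigma>)"
    using continuous_on_Fsig[OF assms(2)] by (rule continuous_on_subset) (use assms(1) in \<open>auto simp: below_def\<close>)
qed

lemma ln_sigma_plus_Fsig_mono: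
  assumes "u1 \<in> below ustar" and "u2 \<in> below ustar" and "u1 \<le> u2"
  shows "ln (\<sigma> u1) + \<mu> * Fsig \<sigma> u1 \<le> ln (\<sigma> u2) + \<mu> * Fsig \<sigma> u2"
proof (rule DERIV_nonneg_imp_increasing_open[OF \<open>u1 \<le> u2\<close>])
  fix x assume "u1 < x" "x < u2"
  then have "x \<in> below ustar"
    using interval_subset_below[OF assms(1,2)] by auto
  moreover have "0 < x"
    using assms(1) \<open>u1 < x\<close> by (auto simp: below_def)
  ultimately have "DERIV (\<lambda>x. ln (\<sigma> x) + \<mu> * Fsig \<sigma> x) x :> 1 / \<sigma> x * \<sigma>' x + \<mu> * (1 / \<sigma> x)"
    using pos \<open>x < u2\<close>
    by (intro DERIV_add DERIV_cmult DERIV_chain2[OF DERIV_ln_divide] DERIV_sigma DERIV_Fsig[OF assms(2)])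
  moreover have "1 / \<sigma> x * \<sigma>' x + \<mu> * (1 / \<sigma> x) = (\<sigma>' x + \<mu>) / \<sigma> x"
    by (simp add: add_divide_distrib)
  moreover have "0 \<le> (\<sigma>' x + \<mu>) / \<sigma> x"
    using derivative_bound[of x] pos[of x] \<open>x \<in> below ustar\<close> by simp
  ultimately show "\<exists>y. DERIV (\<lambda>x. ln (\<sigma> x) + \<mu> * Fsig \<sigma> x) x :> y \<and> 0 \<le> y"
    by auto
next
  have "continuous_on {u1..u2} (Fsig \<sigma>)"
    using continuous_on_Fsig[OF assms(2)] by (rule continuous_on_subset) (use assms(1) in \<open>auto simp: below_def\<close>)
  moreover have "continuous_on {u1..u2} \<sigma>"
    using continuous_on_below interval_subset_below[OF assms(1,2)] by (rule continuous_on_subset)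
  moreover have "\<forall>x\<in>{u1..u2}. \<sigma> x \<noteq> 0"
    using pos interval_subset_below[OF assms(1,2)] by force
  ultimately show "continuous_on {u1..u2} (\<lambda>x. ln (\<sigma> x) + \<mu> * Fsig \<sigma> x)"
    by (intro continuous_intros)
qed

lemma Fsig_unbounded: "\<exists>u\<in>below ustar. v \<le> Fsig \<sigma> u"
proof (rule ccontr)
  assume "\<not> ?thesis"
  then have "(SUP u\<in>below ustar. ennreal (integral {0..u} (\<lambda>s. 1 / \<sigma> s))) \<le> ennreal v"
    by (auto intro!: SUP_least ennreal_leI simp: Fsig_def)
  moreover have "(\<integral>\<^sup>+ s\<in>below ustar. ennreal (1 / \<sigma> s) \<partial>lborel) =
      (SUP u\<in>below ustar. ennreal (integral {0..u} (\<lambda>s. 1 / \<sigma> s)))"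
  proof (rule nn_integral_below_eq_SUP_integral[OF ustar_pos])
    have "\<forall>s\<in>below ustar. \<sigma> s \<noteq> 0"
      using pos by (metis less_irrefl)
    then show "continuous_on (below ustar) (\<lambda>s. 1 / \<sigma> s)"
      using continuous_on_below by (intro continuous_intros)
  qed (use pos in \<open>simp add: less_imp_le\<close>)
  ultimately show False
    using diverge by (simp add: top_unique)
qed

lemma ex1_Fsig_eq:
  assumes "0 \<le> v"
  shows "\<exists>!u. u \<in> below ustar \<and> Fsig \<sigma> u = v"
proof -
  obtain u0 where "u0 \<in> below ustar" and "v \<le> Fsig \<sigma> u0"
    using Fsig_unbounded by blast
  moreover have "Fsig \<sigma> 0 = 0"
    by (simp add: Fsig_def)
  ultimately obtain u where "0 \<le> u" "u \<le> u0" "Fsig \<sigma> u = v"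
    using IVT'[of "Fsig \<sigma>" 0 v u0] continuous_on_Fsig \<open>0 \<le> v\<close> by (auto simp: below_def)
  then have "u \<in> below ustar \<and> Fsig \<sigma> u = v"
    using atLeastAtMost_subset_below[OF \<open>u0 \<in> below ustar\<close>] by auto
  moreover have "u' = u" if "u' \<in> below ustar \<and> Fsig \<sigma> u' = v" for u'
    using Fsig_strict_mono[of u u'] Fsig_strict_mono[of u' u] that calculation
    by (cases u u' rule: linorder_cases) auto
  ultimately show ?thesis
    by blast
qed

definition Fsig_inv :: "real \<Rightarrow> real" where
  "Fsig_inv v = (THE u. u \<in> below ustar \<and> Fsig \<sigma> u = v)"

lemma Fsig_inv: "0 \<le> v \<Longrightarrow> Fsig_inv v \<in> below ustar \<and> Fsig \<sigma> (Fsig_inv v) = v"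
  unfolding Fsig_inv_def by (rule theI'[OF ex1_Fsig_eq])

lemma Fsig_inv_mono:
  assumes "0 \<le> v" and "v \<le> w"
  shows "Fsig_inv v \<le> Fsig_inv w"
proof (rule ccontr)
  assume "\<not> Fsig_inv v \<le> Fsig_inv w"
  then have "Fsig \<sigma> (Fsig_inv w) < Fsig \<sigma> (Fsig_inv v)"
    by (intro Fsig_strict_mono) (use Fsig_inv assms in auto)
  then show False
    using Fsig_inv assms by simp
qed

lemma asig_eq: "asig \<sigma> ustar v = \<sigma> (Fsig_inv v)"
  by (simp add: asig_def Fsig_inv_def)

lemma asig_pos: "0 \<le> v \<Longrightarrow> 0 < asig \<sigma> ustar v"
  by (simp add: asig_eq pos Fsig_inv)

lemma asig_antimono: "0 \<le> v \<Longrightarrow> v \<le> w \<Longrightarrow> asig \<sigma> ustar w \<le> asig \<sigma> ustar v"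
  unfolding asig_eq using Fsig_inv Fsig_inv_mono by (simp add: antimono)

lemma ln_asig_plus_mono:
  assumes "0 \<le> v" and "v \<le> w"
  shows "ln (asig \<sigma> ustar v) + \<mu> * v \<le> ln (asig \<sigma> ustar w) + \<mu> * w"
  using ln_sigma_plus_Fsig_mono[of "Fsig_inv v" "Fsig_inv w"] Fsig_inv Fsig_inv_mono assms
  by (simp add: asig_eq)

end

theorem lemma2p3:
  fixes \<sigma> \<sigma>' :: "real \<Rightarrow> real" and ustar :: ereal and \<mu> :: real
  assumes C1: "\<And>x. x \<ge> 0 \<Longrightarrow> (\<sigma> has_real_derivative \<sigma>' x) (at x within {0..})"
      and C1cont: "continuous_on {0..} \<sigma>'"
      and nonneg: "\<And>s. s \<ge> 0 \<Longrightarrow> \<sigma> s \<ge> 0"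
      and ustar_pos: "ustar > 0"
      and zero_above: "\<And>s. s \<ge> 0 \<Longrightarrow> ereal s \<ge> ustar \<Longrightarrow> \<sigma> s = 0"
      and pos_below: "\<And>s. s \<in> below ustar \<Longrightarrow> \<sigma> s > 0"
      and decr: "\<And>s t. s \<in> below ustar \<Longrightarrow> t \<in> below ustar \<Longrightarrow> s \<le> t \<Longrightarrow> \<sigma> t \<le> \<sigma> s"
      and norm: "C1_norm_le \<sigma> \<sigma>' (below_cl ustar) \<mu>"
      and diverge: "(\<integral>\<^sup>+ s\<in>below ustar. ennreal (1 / \<sigma> s) \<partial>lborel) = \<infinity>"
  shows "(\<forall>v\<ge>0. asig \<sigma> ustar v > 0)
       \<and> (\<forall>v w. 0 \<le> v \<longrightarrow> v \<le> w \<longrightarrow> asig \<sigma> ustar w \<le> asig \<sigma> ustar v)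
       \<and> (\<forall>v y. v \<ge> 0 \<longrightarrow> v + y \<ge> 0 \<longrightarrow>
            exp (- \<mu> * \<bar>y\<bar>) \<le> asig \<sigma> ustar (v + y) / asig \<sigma> ustar v \<and>
            asig \<sigma> ustar (v + y) / asig \<sigma> ustar v \<le> exp (\<mu> * \<bar>y\<bar>))
       \<and> (\<forall>p::real. p \<ge> 2 \<longrightarrow>
            ((\<lambda>v. asig \<sigma> ustar v / v powr p *
                   integral {0..v} (\<lambda>s. s powr (p - 2) / asig \<sigma> ustar s)) \<longlongrightarrow> 0) at_top)"
proof -
  interpret osgood_profile \<sigma> \<sigma>' ustar \<mu>
  proof
    show "(\<sigma> has_real_derivative \<sigma>' x) (at x within {0..})" if "x \<in> below ustar" for x
      using C1 that by (simp add: below_def)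
    show "\<bar>\<sigma>' s\<bar> \<le> \<mu>" if "s \<in> below ustar" for s
    proof -
      have "\<bar>\<sigma> s\<bar> + \<bar>\<sigma>' s\<bar> \<le> \<mu>"
        using C1_norm_le_bound[OF norm] below_subset_below_cl that by blast
      then show ?thesis
        using abs_ge_zero[of "\<sigma> s"] by linarith
    qed
  qed (fact ustar_pos pos_below decr diverge)+
  show ?thesis
    using ratio_exp_bounds[OF asig_pos asig_antimono ln_asig_plus_mono mu_nonneg]
    by (intro conjI allI impI asig_pos asig_antimono
        decreasing_weight_integral_tendsto_zero[OF asig_pos asig_antimono]) simp_all
qed

end
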